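(* For every integer $r\ge 3$, $m(r)\ge (r-1)^{r-1}$.
   Context: A bi-hypergraph $\mathcal H=(V,E)$ consists of a finite vertex set $V$ and a set $E$ of subsets of $V$, called edges, with no edge contained in another. It is $r$-uniform if every edge has exactly $r$ elements. A mapping $f:V\to\mathbb N$ is a proper coloring of $\mathcal H$ if $1<|f(e)|<|e|$ for every $e\in E$, where $f(e)=\{f(v):v\in e\}$. $\mathcal H$ is colorable if it has a proper coloring, and uncolorable otherwise. A subhypergraph of $\mathcal H$ is a bi-hypergraph $(V',E')$ with $V'\subseteq V$, $E'\subseteq E$. $\mathcal H$ is minimal uncolorable if it is uncolorable but every proper subhypergraph of it is colorable. $m(r)$ denotes the smallest positive integer $m$ for which there exists a minimal uncolorable $r$-uniform bi-hypergraph with exactly $m$ edges. *)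

theory Defs
  imports Main
begin

definition bi_hypergraph :: "'a set \<Rightarrow> 'a set set \<Rightarrow> bool" where
  "bi_hypergraph V E \<longleftrightarrow> finite V \<and> (\<forall>e\<in>E. e \<subseteq> V)
     \<and> (\<forall>e\<in>E. \<forall>e'\<in>E. e \<subseteq> e' \<longrightarrow> e = e')"

definition uniform :: "nat \<Rightarrow> 'a set set \<Rightarrow> bool" where
  "uniform r E \<longleftrightarrow> (\<forall>e\<in>E. card e = r)"

definition proper_coloring :: "'a set set \<Rightarrow> ('a \<Rightarrow> nat) \<Rightarrow> bool" where
  "proper_coloring E f \<longleftrightarrow> (\<forall>e\<in>E. 1 < card (f ` e) \<and> card (f ` e) < card e)"

definition colorable :: "'a set \<Rightarrow> 'a set set \<Rightarrow> bool" where
  "colorable V E \<longleftrightarrow> (\<exists>f. proper_coloring E f)"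

definition subhypergraph :: "'a set \<Rightarrow> 'a set set \<Rightarrow> 'a set \<Rightarrow> 'a set set \<Rightarrow> bool" where
  "subhypergraph V' E' V E \<longleftrightarrow> bi_hypergraph V' E' \<and> V' \<subseteq> V \<and> E' \<subseteq> E"

definition minimal_uncolorable :: "'a set \<Rightarrow> 'a set set \<Rightarrow> bool" where
  "minimal_uncolorable V E \<longleftrightarrow> bi_hypergraph V E \<and> \<not> colorable V E
     \<and> (\<forall>V' E'. subhypergraph V' E' V E \<and> (V', E') \<noteq> (V, E) \<longrightarrow> colorable V' E')"

end

theory Submission
  imports Defs "HOL-Library.FuncSet"
begin

text \<open>Colour the vertices with \<open>r - 1\<close> colours. No edge can then receive \<open>r\<close> distinct colours,
  so in an uncolourable \<open>r\<close>-uniform bi-hypergraph every such colouring makes some edge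
  monochromatic. Each edge is monochromatic in a fraction \<open>(r - 1) ^ (1 - r)\<close> of all colourings,
  so the union bound forces at least \<open>(r - 1) ^ (r - 1)\<close> edges.\<close>

lemma card_PiE_constant_on:
  assumes "finite V"
  shows "card (PiE V (\<lambda>v. if v \<in> e then {c} else A)) = card A ^ card (V - e)"
proof -
  have "card (PiE V (\<lambda>v. if v \<in> e then {c} else A)) = (\<Prod>v\<in>V. if v \<in> e then 1 else card A)"
    using assms by (simp add: card_PiE if_distrib cong: if_cong)
  also have "\<dots> = (\<Prod>v\<in>V \<inter> {x. x \<in> e}. 1) * (\<Prod>v\<in>V \<inter> - {x. x \<in> e}. card A)"
    by (rule prod.If_cases[OF assms])
  also have "\<dots> = card A ^ card (V - e)"
    by (simp add: Diff_eq)
  finally show ?thesis .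
qed

lemma monochromatic_edge_of_improper_coloring:
  assumes "uniform r E" and "\<not> proper_coloring E f"
    and "finite A" and "card A < r" and "\<And>e. e \<in> E \<Longrightarrow> f ` e \<subseteq> A"
  shows "\<exists>e\<in>E. \<exists>c\<in>A. \<forall>v\<in>e. f v = c"
proof -
  obtain e where e: "e \<in> E" and improper: "\<not> (1 < card (f ` e) \<and> card (f ` e) < card e)"
    using assms(2) unfolding proper_coloring_def by auto
  have card_e: "card e = r" using assms(1) e unfolding uniform_def by auto
  have img: "f ` e \<subseteq> A" using assms(5) e .
  have fin_img: "finite (f ` e)" using finite_subset[OF img assms(3)] .
  have "card (f ` e) < card e"
    using card_mono[OF assms(3) img] assms(4) card_e by simp
  with improper have "card (f ` e) \<le> Suc 0" by simp
  then have same: "\<forall>a\<in>f ` e. \<forall>b\<in>f ` e. a = b"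
    using card_le_Suc0_iff_eq[OF fin_img] by blast
  obtain x where x: "x \<in> e" using card_e assms(4) by fastforce
  have "\<forall>v\<in>e. f v = f x" using same x by blast
  moreover have "f x \<in> A" using img x by blast
  ultimately show ?thesis using e by blast
qed

lemma uncolorable_card_bound:
  fixes A :: "nat set"
  assumes "bi_hypergraph V E" and "uniform r E" and "\<not> colorable V E"
    and "finite A" and "card A < r"
  shows "card A ^ card V \<le> card E * (card A * card A ^ (card V - r))"
proof -
  have finV: "finite V" and sub: "\<And>e. e \<in> E \<Longrightarrow> e \<subseteq> V"
    using assms(1) unfolding bi_hypergraph_def by auto
  have finE: "finite E"
    using finV sub by (meson Pow_iff finite_Pow_iff finite_subset subsetI)
  define mono where "mono e c = PiE V (\<lambda>v. if v \<in> e then {c} else A)" for e c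
  have card_mono_edge: "card (mono e c) = card A ^ (card V - r)" if "e \<in> E" for e c
  proof -
    have "card (V - e) = card V - r"
      using card_Diff_subset[OF finite_subset[OF sub finV] sub] assms(2) that
      unfolding uniform_def by (simp add: that)
    then show ?thesis unfolding mono_def by (simp only: card_PiE_constant_on[OF finV])
  qed
  have cover: "PiE V (\<lambda>_. A) \<subseteq> (\<Union>e\<in>E. \<Union>c\<in>A. mono e c)"
  proof
    fix f assume f: "f \<in> PiE V (\<lambda>_. A)"
    have "\<not> proper_coloring E f" using assms(3) unfolding colorable_def by auto
    moreover have "f ` e \<subseteq> A" if "e \<in> E" for e using f sub[OF that] by auto
    ultimately obtain e c where "e \<in> E" "c \<in> A" "\<forall>v\<in>e. f v = c"
      using monochromatic_edge_of_improper_coloring[OF assms(2) _ assms(4,5)] by blast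
    moreover from this have "f \<in> mono e c" using f unfolding mono_def by (auto simp: PiE_def Pi_def)
    ultimately show "f \<in> (\<Union>e\<in>E. \<Union>c\<in>A. mono e c)" by blast
  qed
  have "finite (\<Union>e\<in>E. \<Union>c\<in>A. mono e c)"
    unfolding mono_def using finE assms(4) finV by (simp add: finite_PiE)
  then have "card A ^ card V \<le> card (\<Union>e\<in>E. \<Union>c\<in>A. mono e c)"
    using card_mono[OF _ cover] finV by (simp add: card_PiE)
  also have "\<dots> \<le> (\<Sum>e\<in>E. card (\<Union>c\<in>A. mono e c))"
    by (rule card_UN_le[OF finE])
  also have "\<dots> \<le> (\<Sum>e\<in>E. \<Sum>c\<in>A. card (mono e c))"
    by (intro sum_mono card_UN_le assms(4))
  also have "\<dots> = card E * (card A * card A ^ (card V - r))"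
    by (simp add: card_mono_edge)
  finally show ?thesis .
qed

theorem mainTheorem2:
  fixes r :: nat and V :: "'a set" and E :: "'a set set"
  assumes "r \<ge> 3"
    and "minimal_uncolorable V E"
    and "uniform r E"
  shows "card E \<ge> (r - 1) ^ (r - 1)"
proof -
  define k where "k = r - 1"
  have hyp: "bi_hypergraph V E" and unc: "\<not> colorable V E"
    using assms(2) unfolding minimal_uncolorable_def by auto
  have bound: "k ^ card V \<le> card E * (k * k ^ (card V - r))"
    using uncolorable_card_bound[OF hyp assms(3) unc, of "{0..<k}"] assms(1) k_def by simp
  obtain e where "e \<in> E"
    using unc unfolding colorable_def proper_coloring_def by blast
  then have "r \<le> card V"
    using hyp assms(3) unfolding bi_hypergraph_def uniform_def by (metis card_mono)
  then have "card V = k + Suc (card V - r)" using assms(1) k_def by simp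
  then have "k ^ card V = k ^ k * (k * k ^ (card V - r))"
    by (metis power_add power_Suc)
  with bound have "k ^ k * (k * k ^ (card V - r)) \<le> card E * (k * k ^ (card V - r))" by simp
  moreover have "0 < k * k ^ (card V - r)" using assms(1) k_def by simp
  ultimately show ?thesis unfolding k_def by (rule mult_right_le_imp_le)
qed

end
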